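(* Let $\mu$ be a positive Radon measure on $\mathbb{R}^d$ satisfying the growth condition with constants $C_0>0$, $n\in(0,d]$, let $1\le q\le p\le\infty$, and let $k_1,k_2>1$. Then $\mathcal{C}^p_q(k_1,\mu)$ and $\mathcal{C}^p_q(k_2,\mu)$ coincide as sets and their norms are equivalent: there is a constant $C\ge1$ such that for all $f\in L^1_{loc}(\mu)$, \[ C^{-1}\|f:\mathcal{C}^p_q(k_2,\mu)\|\le \|f:\mathcal{C}^p_q(k_1,\mu)\|\le C\,\|f:\mathcal{C}^p_q(k_2,\mu)\|. \]
   Context: Growth condition: $\mu(Q(x,l)) \le C_0\,l^n$ for all $x \in \operatorname{supp}(\mu)$ and $l>0$. Cubes are closed with sides parallel to the axes; $Q(x,l)$ is the cube centered at $x$ of side length $l$; $z_Q$, $\ell(Q)$ are center and side length; $\rho Q$ is concentric with $Q$ of side length $\rho\ell(Q)$. $\mathcal{Q}(\mu)$ is the set of cubes of positive $\mu$-measure (including $\mathbb{R}^d$ if $\mu$ is finite). $Q\in\mathcal{Q}(\mu)$ is doubling if $\mu(2Q)\le 2^{d+1}\mu(Q)$; $\mathcal{Q}(\mu,2)$ is the set of doubling cubes. For $Q\in\mathcal{Q}(\mu)$, $Q^*$ is the smallest doubling cube of the form $2^jQ$, $j\ge 0$. For $Q\subset R$, $Q\in\mathcal{Q}(\mu)$, let $Q_R$ be the smallest cube concentric with $Q$ containing $R$, $\delta(Q,R):=\int_{\ell(Q)}^{\ell(Q_R)} \mu(Q(z_Q,l))\,l^{-n}\,\frac{dl}{l}$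 and $K_{Q,R}:=1+\delta(Q,R)$. $m_Q(f):=\mu(Q)^{-1}\int_Q f\,d\mu$. For $k>1$, \[ \|f : \mathcal{C}^p_q(k,\mu)\| := \sup_{Q \in \mathcal{Q}(\mu)} \mu(kQ)^{\frac{1}{p}-\frac{1}{q}} \Big(\int_Q|f(x)-m_{Q^*}(f)|^q\,d\mu(x)\Big)^{\frac{1}{q}} + \sup_{Q \subset R,\ Q,R \in \mathcal{Q}(\mu,2)} \mu(Q)^{\frac{1}{p}} \frac{|m_Q(f)-m_R(f)|}{K_{Q,R}}, \] and $\mathcal{C}^p_q(k,\mu)$ is the set of $f\in L^1_{loc}(\mu)$ for which this is finite. *)

theory Defs
  imports "HOL-Analysis.Analysis" "HOL-Probability.Essential_Supremum"
begin

text \<open>Cubes: None stands for the whole space R^d, Some (z,l) for the closed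
  axis-parallel cube with centre z and side length l.\<close>
type_synonym 'a cube = "('a \<times> real) option"

definition cube_set :: "'a::euclidean_space cube \<Rightarrow> 'a set" where
  "cube_set Q = (case Q of None \<Rightarrow> UNIV
     | Some (z, l) \<Rightarrow> cbox (z - (l/2) *\<^sub>R One) (z + (l/2) *\<^sub>R One))"

definition Qc :: "'a::euclidean_space \<Rightarrow> real \<Rightarrow> 'a set" where
  "Qc x l = cube_set (Some (x, l))"

definition dilate :: "real \<Rightarrow> 'a cube \<Rightarrow> 'a cube" where
  "dilate \<rho> Q = (case Q of None \<Rightarrow> None | Some (z, l) \<Rightarrow> Some (z, \<rho> * l))"

definition support :: "'a::euclidean_space measure \<Rightarrow> 'a set" where
  "support M = {x. \<forall>r>0. emeasure M (ball x r) > 0}"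

definition cubes_pos :: "'a::euclidean_space measure \<Rightarrow> 'a cube set" where
  "cubes_pos M = {Q. (case Q of None \<Rightarrow> emeasure M UNIV < \<infinity> | Some (z, l) \<Rightarrow> l > 0)
                     \<and> emeasure M (cube_set Q) > 0}"

definition doubling :: "'a::euclidean_space measure \<Rightarrow> 'a cube \<Rightarrow> bool" where
  "doubling M Q \<longleftrightarrow> Q \<in> cubes_pos M \<and>
     emeasure M (cube_set (dilate 2 Q)) \<le> 2 ^ (DIM('a) + 1) * emeasure M (cube_set Q)"

definition cubes_doubling :: "'a::euclidean_space measure \<Rightarrow> 'a cube set" where
  "cubes_doubling M = {Q. doubling M Q}"

definition star :: "'a::euclidean_space measure \<Rightarrow> 'a cube \<Rightarrow> 'a cube" where
  "star M Q = dilate (2 ^ (LEAST j::nat. doubling M (dilate (2 ^ j) Q))) Q"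

definition mean :: "'a::euclidean_space measure \<Rightarrow> ('a \<Rightarrow> real) \<Rightarrow> 'a cube \<Rightarrow> real" where
  "mean M f Q = (LINT x:cube_set Q|M. f x) / measure M (cube_set Q)"

definition locally_integrable :: "'a::euclidean_space measure \<Rightarrow> ('a \<Rightarrow> real) \<Rightarrow> bool" where
  "locally_integrable M f \<longleftrightarrow> (\<forall>K. compact K \<longrightarrow> set_integrable M K f)"

definition einv :: "ereal \<Rightarrow> real" where
  "einv p = (if p = \<infinity> then 0 else 1 / real_of_ereal p)"

definition enn_powr :: "ennreal \<Rightarrow> real \<Rightarrow> ennreal" where
  "enn_powr x a = (if x = top then top else ennreal (enn2real x powr a))"

definition Lq_on :: "'a::euclidean_space measure \<Rightarrow> ereal \<Rightarrow> 'a set \<Rightarrow> ('a \<Rightarrow> real) \<Rightarrow> ennreal" where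
  "Lq_on M q A g = (if q = \<infinity> then e2ennreal (esssup M (\<lambda>x. ereal (indicator A x * \<bar>g x\<bar>)))
     else enn_powr (\<integral>\<^sup>+x\<in>A. ennreal (\<bar>g x\<bar> powr real_of_ereal q) \<partial>M) (1 / real_of_ereal q))"

definition side_QR :: "'a::euclidean_space cube \<Rightarrow> 'a cube \<Rightarrow> ereal" where
  "side_QR Q R = (case Q of None \<Rightarrow> \<infinity> | Some (z, l) \<Rightarrow>
     (case R of None \<Rightarrow> \<infinity> | Some _ \<Rightarrow> ereal (Inf {s. s > 0 \<and> cube_set R \<subseteq> Qc z s})))"

definition delta :: "'a::euclidean_space measure \<Rightarrow> real \<Rightarrow> 'a cube \<Rightarrow> 'a cube \<Rightarrow> ennreal" where
  "delta M n Q R = (case Q of None \<Rightarrow> 0 | Some (z, l) \<Rightarrow>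
     \<integral>\<^sup>+s. indicator {s. ereal l \<le> ereal s \<and> ereal s \<le> side_QR Q R} s *
        ennreal (measure M (Qc z s) * s powr (- n) / s) \<partial>lborel)"

definition K_QR :: "'a::euclidean_space measure \<Rightarrow> real \<Rightarrow> 'a cube \<Rightarrow> 'a cube \<Rightarrow> ennreal" where
  "K_QR M n Q R = 1 + delta M n Q R"

definition Cnorm :: "'a::euclidean_space measure \<Rightarrow> real \<Rightarrow> ereal \<Rightarrow> ereal \<Rightarrow> real
                     \<Rightarrow> ('a \<Rightarrow> real) \<Rightarrow> ennreal" where
  "Cnorm M n p q k f =
     (SUP Q\<in>cubes_pos M.
        ennreal (measure M (cube_set (dilate k Q)) powr (einv p - einv q)) *
        Lq_on M q (cube_set Q) (\<lambda>x. f x - mean M f (star M Q)))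
   + (SUP QR\<in>{(Q, R). Q \<in> cubes_doubling M \<and> R \<in> cubes_doubling M \<and> cube_set Q \<subseteq> cube_set R}.
        ennreal (measure M (cube_set (fst QR)) powr einv p) *
        ennreal \<bar>mean M f (fst QR) - mean M f (snd QR)\<bar> / K_QR M n (fst QR) (snd QR))"

end

theory Submission
  imports Defs
begin

text \<open>
  Since \<open>1/p - 1/q \<le> 0\<close>, enlarging \<open>k\<close> can only decrease the norm.  Conversely, for
  \<open>k < k'\<close> cut a cube \<open>Q\<close> into \<open>2^(t d)\<close> dyadic subcubes \<open>Q'\<close>, with \<open>t\<close> so large that
  \<open>k' Q' \<subseteq> k Q\<close>.  On \<open>Q'\<close>, \<open>|f - m(Q*)| \<le> |f - m(Q'*)| + |m(Q'*) - m(Q*)|\<close>: the first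
  summand is controlled by the \<open>k'\<close>-norm, the second by comparing both means with the mean over
  a common doubling ancestor \<open>R\<close>, at the price of the factors \<open>K(Q*,R)\<close> and \<open>K(Q'*,R)\<close>.
  These depend on \<open>t\<close> only: along non-doubling cubes the measure grows by \<open>2^(d+1)\<close> per
  doubling of the side, while the growth condition allows only \<open>2^d\<close>; so the measures of the
  cubes \<open>2^i Q\<close> below \<open>Q*\<close> decay geometrically and the integral defining \<open>\<delta>\<close> is dominated
  by a geometric series.
\<close>

section \<open>Cubes\<close>

lemma Qc_eq: "Qc z l = cbox (z - (l/2) *\<^sub>R One) (z + (l/2) *\<^sub>R One)"
  by (simp add: Qc_def cube_set_def)

lemma mem_Qc: "x \<in> Qc (z::'a::euclidean_space) l \<longleftrightarrow> (\<forall>b\<in>Basis. \<bar>(x - z) \<bullet> b\<bar> \<le> l/2)"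
  unfolding Qc_eq mem_box
  by (intro ball_cong refl) (auto simp: inner_diff_left inner_add_left split: abs_split)

lemma Qc_subset_Qc:
  assumes "\<And>b. b \<in> Basis \<Longrightarrow> \<bar>(y - c) \<bullet> b\<bar> + s/2 \<le> s'/2"
  shows "Qc (y::'a::euclidean_space) s \<subseteq> Qc c s'"
proof
  fix x assume "x \<in> Qc y s"
  then have x: "\<And>b. b \<in> Basis \<Longrightarrow> \<bar>(x - y) \<bullet> b\<bar> \<le> s/2" by (auto simp: mem_Qc)
  show "x \<in> Qc c s'" unfolding mem_Qc
  proof
    fix b :: 'a assume b: "b \<in> Basis"
    have "(x - c) \<bullet> b = (x - y) \<bullet> b + (y - c) \<bullet> b" by (simp add: inner_diff_left)
    then show "\<bar>(x - c) \<bullet> b\<bar> \<le> s'/2" using x[OF b] assms[OF b] by linarith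
  qed
qed

lemma compact_Qc: "compact (Qc z l)"
  by (simp add: Qc_eq)

lemma Qc_mono: "s \<le> s' \<Longrightarrow> Qc z s \<subseteq> Qc z s'"
  by (rule Qc_subset_Qc) auto

lemma cube_set_Some: "cube_set (Some (z, l)) = Qc z l"
  by (simp add: Qc_def)

lemma dilate_Some: "dilate r (Some (z, l)) = Some (z, r * l)"
  by (simp add: dilate_def)

lemma cube_set_dilate_Some: "cube_set (dilate r (Some (z, l))) = Qc z (r * l)"
  by (simp add: dilate_Some cube_set_Some)

lemma side_QR_le:
  assumes "cube_set R \<subseteq> Qc c s" "s > 0" "R \<noteq> None"
  shows "side_QR (Some (c, l)) R \<le> ereal s"
proof -
  have "Inf {s'. s' > 0 \<and> cube_set R \<subseteq> Qc c s'} \<le> s"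
    using assms by (intro cInf_lower) (auto intro: bdd_belowI[of _ 0])
  then show ?thesis using assms(3) by (auto simp: side_QR_def)
qed

lemma Qc_subset_dyadic_ancestor:
  assumes u: "u > 0" and near: "\<And>b. b \<in> Basis \<Longrightarrow> \<bar>(y - c) \<bullet> b\<bar> \<le> 2^t * u / 2"
    and "E' \<le> E" "t \<le> E"
  shows "Qc y (2^E' * u) \<subseteq> Qc c (2^v * (2^(E+1) * u))"
proof (rule Qc_subset_Qc)
  fix b :: 'a assume b: "b \<in> Basis"
  have "(2::real)^t \<le> 2^E" "(2::real)^E' \<le> 2^E" "(2::real)^(E+1) \<le> 2^v * 2^(E+1)"
    using assms by (auto intro: power_increasing)
  then have "2^t * u/2 \<le> 2^E * u/2" "2^E' * u/2 \<le> 2^E * u/2" "2^E * u \<le> 2^v * (2^(E+1) * u)/2"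
    using u by (simp_all add: mult_right_mono)
  then show "\<bar>(y - c) \<bullet> b\<bar> + 2^E' * u/2 \<le> 2^v * (2^(E+1) * u)/2"
    using near[OF b] by linarith
qed

lemma dyadic_ancestor_subset_Qc:
  assumes u: "u > 0" and near: "\<And>b. b \<in> Basis \<Longrightarrow> \<bar>(y - c) \<bullet> b\<bar> \<le> 2^t * u / 2"
    and "t \<le> E"
  shows "Qc c (2^v * (2^(E+1) * u)) \<subseteq> Qc y (2^(E+2+v) * u)"
proof (rule Qc_subset_Qc)
  fix b :: 'a assume b: "b \<in> Basis"
  have "\<bar>(c - y) \<bullet> b\<bar> = \<bar>(y - c) \<bullet> b\<bar>" by (simp add: inner_diff_left)
  moreover have "(2::real)^t \<le> 2^(E+v+1)" using assms by (intro power_increasing) auto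
  then have "2^t * u/2 \<le> 2^(E+v+1) * u/2" using u by (simp add: mult_right_mono)
  moreover have "2^(E+2+v) * u = 2^v * (2^(E+1) * u) + 2^(E+v+1) * (u::real)"
    by (simp add: power_add algebra_simps)
  ultimately show "\<bar>(c - y) \<bullet> b\<bar> + 2^v * (2^(E+1) * u)/2 \<le> 2^(E+2+v) * u / 2"
    using near[OF b] by linarith
qed

text \<open>Centres of the \<open>2^(t d)\<close> subcubes of side \<open>l/2^t\<close> tiling \<open>Qc z l\<close>.\<close>
definition dyadic_centres :: "'a::euclidean_space \<Rightarrow> real \<Rightarrow> nat \<Rightarrow> 'a set" where
  "dyadic_centres z l t =
     (\<lambda>g. z + (\<Sum>b\<in>Basis. ((real (g b) + 1/2) * (l / 2^t) - l/2) *\<^sub>R b)) ` PiE Basis (\<lambda>_. {..<2^t})"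

lemma finite_dyadic_centres: "finite (dyadic_centres z l t)"
  by (simp add: dyadic_centres_def finite_PiE)

lemma card_dyadic_centres_le: "card (dyadic_centres (z::'a::euclidean_space) l t) \<le> (2^t)^DIM('a)"
proof -
  have "card (dyadic_centres z l t) \<le> card (PiE (Basis::'a set) (\<lambda>_. {..<(2::nat)^t}))"
    unfolding dyadic_centres_def by (rule card_image_le) (simp add: finite_PiE)
  then show ?thesis by (simp add: card_PiE)
qed

lemma dyadic_centre_near:
  assumes l: "l \<ge> 0" and y: "y \<in> dyadic_centres z l t" and b: "b \<in> Basis"
  shows "\<bar>(y - z) \<bullet> b\<bar> \<le> l/2 - (l / 2^t)/2"
proof -
  define u where "u = l / 2^t"
  obtain g where g: "g \<in> PiE Basis (\<lambda>_. {..<2^t})"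
    and yg: "y = z + (\<Sum>b\<in>Basis. ((real (g b) + 1/2) * u - l/2) *\<^sub>R b)"
    using y by (auto simp: dyadic_centres_def u_def)
  have "g b + 1 \<le> 2^t" using g b by (auto simp: PiE_def Pi_def)
  then have "real (g b + 1) \<le> real ((2::nat)^t)" by (simp only: of_nat_le_iff)
  then have "(real (g b) + 1) * u \<le> 2^t * u"
    using l by (intro mult_right_mono) (auto simp: u_def)
  moreover have "2^t * u = l" using l by (simp add: u_def)
  ultimately have "real (g b) * u + u \<le> l" by (simp add: distrib_right)
  moreover have "0 \<le> real (g b) * u" using l by (simp add: u_def)
  moreover have "(y - z) \<bullet> b = real (g b) * u + u/2 - l/2"
    unfolding yg by (simp only: add_diff_cancel_left' inner_sum_left_Basis[OF b]) (simp add: algebra_simps)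
  ultimately show ?thesis unfolding u_def[symmetric] abs_le_iff by linarith
qed

lemma clamped_floor_bounds:
  fixes r :: real
  assumes "N \<ge> 1" "0 \<le> r" "r \<le> real N"
  shows "min (N - 1) (nat \<lfloor>r\<rfloor>) < N" "real (min (N - 1) (nat \<lfloor>r\<rfloor>)) \<le> r"
    "r \<le> real (min (N - 1) (nat \<lfloor>r\<rfloor>)) + 1"
  using assms by (auto simp: min_def of_nat_diff) linarith+

lemma Qc_subset_dyadic_subcubes:
  assumes l: "l > 0"
  shows "Qc z l \<subseteq> (\<Union>y\<in>dyadic_centres z l t. Qc y (l / 2^t))"
proof
  fix x assume x: "x \<in> Qc z l"
  define N :: nat where "N = 2^t"
  define u where "u = l / 2^t"
  have u: "u > 0" and Nu: "real N * u = l" using l by (simp_all add: N_def u_def)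
  define r where "r b = ((x - z) \<bullet> b + l/2) / u" for b
  have r: "0 \<le> r b" "r b \<le> real N" if "b \<in> Basis" for b
  proof -
    have "\<bar>(x - z) \<bullet> b\<bar> \<le> l/2" using x that by (simp add: mem_Qc)
    then show "0 \<le> r b" "r b \<le> real N" using u Nu by (auto simp: r_def divide_le_eq)
  qed
  define g where "g = restrict (\<lambda>b. min (N - 1) (nat \<lfloor>r b\<rfloor>)) Basis"
  have N: "N \<ge> 1" by (simp add: N_def)
  have gI: "g \<in> PiE Basis (\<lambda>_. {..<N})"
    using clamped_floor_bounds(1)[OF N] r by (auto simp: g_def)
  define y where "y = z + (\<Sum>b\<in>Basis. ((real (g b) + 1/2) * u - l/2) *\<^sub>R b)"
  have "y \<in> dyadic_centres z l t" using gI by (auto simp: dyadic_centres_def y_def u_def N_def)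
  moreover have "x \<in> Qc y u"
    unfolding mem_Qc
  proof
    fix b :: 'a assume b: "b \<in> Basis"
    have "real (g b) \<le> r b" "r b \<le> real (g b) + 1"
      using clamped_floor_bounds(2,3)[OF N r[OF b]] b by (auto simp: g_def)
    then have "real (g b) * u \<le> r b * u" "r b * u \<le> real (g b) * u + u"
      using u mult_right_mono[of "r b" "real (g b) + 1" u] by (auto intro: mult_right_mono simp: distrib_right)
    moreover have "r b * u = (x - z) \<bullet> b + l/2" using u by (simp add: r_def)
    moreover have "(y - z) \<bullet> b = (real (g b) + 1/2) * u - l/2"
      unfolding y_def by (simp only: add_diff_cancel_left' inner_sum_left_Basis[OF b])
    then have "(x - y) \<bullet> b = (x - z) \<bullet> b + l/2 - real (g b) * u - u/2"
      by (simp add: inner_diff_left inner_diff_right algebra_simps)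
    ultimately show "\<bar>(x - y) \<bullet> b\<bar> \<le> u/2" unfolding abs_le_iff by linarith
  qed
  ultimately show "x \<in> (\<Union>y\<in>dyadic_centres z l t. Qc y (l / 2^t))" by (auto simp: u_def)
qed

lemma powr_pow2_mult: "x \<ge> 0 \<Longrightarrow> ((2::real)^i * x) powr a = (2 powr a)^i * x powr a"
  by (simp add: powr_mult powr_realpow[symmetric] powr_powr mult.commute flip: powr_power)

lemma two_powr_le_power: "n \<le> real d \<Longrightarrow> (2::real) powr n \<le> 2^d"
  using powr_mono[of n "real d" 2] by (simp add: powr_realpow)

lemma dyadic_interval_exists:
  fixes a s :: real
  assumes "a > 0" "J \<ge> 1" "a \<le> s" "s \<le> 2^J * a"
  shows "\<exists>k<J. 2^k * a \<le> s \<and> s \<le> 2^(Suc k) * a"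
  using assms(2-)
proof (induction J rule: dec_induct)
  case (step J)
  then show ?case by (cases "s \<le> 2^J * a") (auto intro: less_SucI)
qed auto

lemma half_power_diff_le: "(1/2::real)^(m - k) \<le> 2^k * (1/2)^m"
proof (cases "k \<le> m")
  case True
  then have "(1/2::real)^m = (1/2)^(m - k) * (1/2)^k" by (simp flip: power_add)
  then show ?thesis by (simp add: power_one_over)
next
  case False
  then have "(2::real)^m \<le> 2^k" by (intro power_increasing) auto
  then show ?thesis using False by (simp add: power_one_over)
qed

lemma abs_diff_powr_le:
  fixes a c c' q :: real
  assumes "q \<ge> 1"
  shows "\<bar>a - c\<bar> powr q \<le> 2 powr q * (\<bar>a - c'\<bar> powr q + \<bar>c' - c\<bar> powr q)"
proof -
  define m where "m = max \<bar>a - c'\<bar> \<bar>c' - c\<bar>"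
  have "\<bar>a - c'\<bar> \<le> m" "\<bar>c' - c\<bar> \<le> m" by (simp_all add: m_def)
  then have "\<bar>a - c\<bar> \<le> 2 * m"
    using abs_triangle_ineq[of "a - c'" "c' - c"] by simp
  then have "\<bar>a - c\<bar> powr q \<le> (2 * m) powr q"
    using assms by (intro powr_mono2) auto
  also have "\<dots> = 2 powr q * m powr q" by (rule powr_mult)
  also have "\<dots> \<le> 2 powr q * (\<bar>a - c'\<bar> powr q + \<bar>c' - c\<bar> powr q)"
    by (intro mult_left_mono) (auto simp: m_def max_def)
  finally show ?thesis .
qed

lemma powr_one_over_le:
  fixes c N q :: real
  assumes c: "0 \<le> c" "c \<le> N" and N: "N \<ge> 1" and q: "q \<ge> 1"
  shows "c powr (1/q) \<le> N"
proof (cases "c \<ge> 1")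
  case True
  then have "c powr (1/q) \<le> c powr 1" using q by (intro powr_mono) auto
  then show ?thesis using c by simp
next
  case False
  then have "c powr (1/q) \<le> 1" using c q by (intro powr_le1) auto
  then show ?thesis using N by linarith
qed

lemma root_sum_powr_le:
  fixes A C q :: real
  assumes A: "A \<ge> 0" and C: "C \<ge> 0" and q: "q \<ge> 1"
  shows "(A powr q + C powr q) powr (1/q) \<le> 2 * (A + C)"
proof -
  have "A powr q \<le> (A + C) powr q" "C powr q \<le> (A + C) powr q"
    using A C q by (auto intro!: powr_mono2)
  then have "A powr q + C powr q \<le> 2 * (A + C) powr q" by simp
  then have "(A powr q + C powr q) powr (1/q) \<le> 2 powr (1/q) * (A + C)"
    using q A C powr_mono2[of "1/q" "A powr q + C powr q" "2 * (A + C) powr q"]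
    by (simp add: powr_mult powr_powr)
  also have "\<dots> \<le> 2 * (A + C)"
    using q A C powr_mono[of "1/q" 1 2] by (intro mult_right_mono) auto
  finally show ?thesis .
qed

lemma powr_mult_measure_le:
  fixes d K \<mu> X e q :: real
  assumes d: "\<bar>d\<bar> \<le> K * \<mu> powr (-e)" and \<mu>: "0 < \<mu>" "\<mu> \<le> X" and K: "K \<ge> 0"
    and q: "q \<ge> 1" and eq: "e * q \<le> 1"
  shows "\<bar>d\<bar> powr q * \<mu> \<le> K powr q * X powr (1 - e * q)"
proof -
  have "\<bar>d\<bar> powr q * \<mu> \<le> (K * \<mu> powr (-e)) powr q * \<mu>"
    using d q \<mu> by (intro mult_right_mono powr_mono2) auto
  also have "\<dots> = K powr q * (\<mu> powr (-e * q) * \<mu> powr 1)"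
    by (simp only: powr_mult powr_powr powr_one[OF less_imp_le[OF \<mu>(1)]] mult.assoc)
  also have "\<dots> = K powr q * \<mu> powr (1 - e * q)"
    by (simp only: powr_add[symmetric]) (simp add: algebra_simps)
  also have "\<dots> \<le> K powr q * X powr (1 - e * q)"
    using \<mu> eq by (intro mult_left_mono powr_mono2) auto
  finally show ?thesis .
qed

lemma le_of_scaled_root_le:
  assumes Y: "Y > 0" and A: "A \<ge> 0" and q: "q \<ge> 1"
    and H: "ennreal (Y powr (e - 1/q)) * enn_powr I (1/q) \<le> ennreal A"
  shows "I \<le> ennreal (A powr q * Y powr (1 - e * q))"
proof -
  have "I \<noteq> top"
    using H Y by (auto simp: enn_powr_def ennreal_mult_top top_unique)
  then obtain r where r: "I = ennreal r" "r \<ge> 0" by (cases I) auto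
  then have "Y powr (e - 1/q) * r powr (1/q) \<le> A"
    using H A by (simp add: enn_powr_def ennreal_mult[symmetric] ennreal_le_iff)
  then have "Y powr (1/q - e) * (Y powr (e - 1/q) * r powr (1/q)) \<le> Y powr (1/q - e) * A"
    by (intro mult_left_mono) auto
  moreover have "Y powr (1/q - e) * Y powr (e - 1/q) = 1" using Y by (simp flip: powr_add)
  then have "Y powr (1/q - e) * (Y powr (e - 1/q) * r powr (1/q)) = r powr (1/q)"
    by (metis mult.assoc mult_1)
  ultimately have "r powr (1/q) \<le> Y powr (1/q - e) * A" by linarith
  then have "r powr (1/q) \<le> A * Y powr (1/q - e)" by (metis mult.commute)
  then have "(r powr (1/q)) powr q \<le> (A * Y powr (1/q - e)) powr q"
    using q by (intro powr_mono2) auto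
  moreover have "(1/q - e) * q = 1 - e * q" using q by (simp add: field_simps)
  ultimately have "r \<le> A powr q * Y powr (1 - e * q)"
    using q r A by (simp add: powr_powr powr_mult)
  then show ?thesis using r by (simp add: ennreal_leI)
qed

lemma scaled_root_le_of_le:
  fixes X q e A C N c :: real
  assumes X: "X > 0" and q: "q \<ge> 1" and A: "A \<ge> 0" and C: "C \<ge> 0"
    and c: "0 \<le> c" "c \<le> N" and N: "N \<ge> 1"
    and I: "I \<le> ennreal (c * (2 powr q * (A powr q + C powr q) * X powr (1 - e * q)))"
  shows "ennreal (X powr (e - 1/q)) * enn_powr I (1/q) \<le> ennreal (4 * N * (A + C))"
proof -
  define S where "S = A powr q + C powr q"
  obtain r where r: "I = ennreal r" "0 \<le> r" "r \<le> c * (2 powr q * S * X powr (1 - e * q))"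
    using I c by (cases I) (auto simp: S_def ennreal_le_iff top_unique)
  have root: "(c * (2 powr q * S * X powr (1 - e * q))) powr (1/q)
      = c powr (1/q) * 2 * S powr (1/q) * X powr (1/q - e)"
  proof -
    have "(1 - e * q) * (1/q) = 1/q - e" using q by (simp add: field_simps)
    then show ?thesis using q c by (simp add: S_def powr_mult powr_powr)
  qed
  have c_root: "c powr (1/q) \<le> N" by (rule powr_one_over_le[OF c N q])
  have S_root: "S powr (1/q) \<le> 2 * (A + C)" unfolding S_def by (rule root_sum_powr_le[OF A C q])
  have "r powr (1/q) \<le> (c * (2 powr q * S * X powr (1 - e * q))) powr (1/q)"
    using r q by (intro powr_mono2) auto
  then have "X powr (e - 1/q) * r powr (1/q)
      \<le> X powr (e - 1/q) * (c powr (1/q) * 2 * S powr (1/q) * X powr (1/q - e))"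
    unfolding root by (intro mult_left_mono) auto
  also have "\<dots> = c powr (1/q) * 2 * S powr (1/q) * (X powr (e - 1/q) * X powr (1/q - e))"
    by (simp only: mult_ac)
  also have "\<dots> = c powr (1/q) * 2 * S powr (1/q)"
    using X by (simp flip: powr_add)
  also have "\<dots> \<le> N * 2 * (2 * (A + C))"
    using c_root S_root N by (intro mult_mono) auto
  finally have "X powr (e - 1/q) * r powr (1/q) \<le> 4 * N * (A + C)"
    by (simp add: algebra_simps)
  then show ?thesis using r by (simp add: enn_powr_def ennreal_mult[symmetric] ennreal_leI)
qed

lemma ennreal_le_mult_self: "C \<ge> 1 \<Longrightarrow> x \<le> ennreal C * x"
  using mult_right_mono[of 1 "ennreal C" x] by simp

definition ndist :: "nat \<Rightarrow> nat \<Rightarrow> nat" where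
  "ndist g e = (if g \<le> e then e - g else g - e)"

lemma sum_half_power_ndist_le: "(\<Sum>g<L. (1/2::real)^(ndist g e)) \<le> 4"
proof -
  have half_sum: "(\<Sum>g\<in>S. (1/2::real)^(h g)) \<le> 2" if "finite S" "inj_on h S" for S h
  proof -
    have "(\<Sum>g\<in>S. (1/2::real)^(h g)) = (\<Sum>i\<in>h ` S. (1/2)^i)"
      using that by (simp add: sum.reindex)
    also have "\<dots> \<le> 2" using geometric_sum_less[of "1/2::real" "h ` S"] that by auto
    finally show ?thesis .
  qed
  define S1 where "S1 = {g. g < L \<and> g \<le> e}"
  define S2 where "S2 = {g. g < L \<and> e < g}"
  have "{..<L} = S1 \<union> S2" "S1 \<inter> S2 = {}" "finite S1" "finite S2"
    by (auto simp: S1_def S2_def)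
  then have "(\<Sum>g<L. (1/2::real)^(ndist g e))
      = (\<Sum>g\<in>S1. (1/2::real)^(ndist g e)) + (\<Sum>g\<in>S2. (1/2::real)^(ndist g e))"
    by (simp add: sum.union_disjoint)
  also have "\<dots> = (\<Sum>g\<in>S1. (1/2::real)^(e - g)) + (\<Sum>g\<in>S2. (1/2::real)^(g - e))"
    by (intro arg_cong2[where f="(+)"] sum.cong) (auto simp: S1_def S2_def ndist_def)
  also have "\<dots> \<le> 2 + 2"
    by (intro add_mono half_sum) (auto simp: S1_def S2_def inj_on_def)
  finally show ?thesis by simp
qed

text \<open>
  Weights bounding \<open>\<mu>(Q(y, 2^(g+1) u)) / (2^g u)^n\<close> for \<open>Q(y, u)\<close> inside \<open>Q(c, 2^t u)\<close>: the
  indicator covers the scales below \<open>t\<close>, the geometric terms the scales around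
  \<open>Q(c, 2^t u)*\<close> (of side \<open>2^E u\<close>) and around its ancestor \<open>Q(c, 2^(E+1) u)*\<close> (of side
  \<open>2^(E+v+1) u\<close>).
\<close>
definition delta_weight :: "nat \<Rightarrow> nat \<Rightarrow> nat \<Rightarrow> nat \<Rightarrow> real" where
  "delta_weight t E v g =
     (if g < t then 1 else 0) + 4 * (1/2)^(ndist g E) + 4 * (1/2)^(ndist g (E+v))"

lemma half_power_ndist_le_delta_weight:
  assumes "k \<le> 2"
  shows "(1/2::real)^(ndist g E - k) \<le> delta_weight t E v g"
    and "(1/2::real)^(ndist g (E+v) - k) \<le> delta_weight t E v g"
proof -
  have "(1/2::real)^(d - k) \<le> 4 * (1/2)^d" for d
  proof -
    have "(2::real)^k \<le> 2^2" using assms by (intro power_increasing) auto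
    then have "(2::real)^k * (1/2)^d \<le> 4 * (1/2)^d" by (intro mult_right_mono) auto
    then show ?thesis using half_power_diff_le[of d k] by linarith
  qed
  moreover have "4 * (1/2::real)^(ndist g E) \<le> delta_weight t E v g"
    and "4 * (1/2::real)^(ndist g (E+v)) \<le> delta_weight t E v g"
    by (simp_all add: delta_weight_def)
  ultimately show "(1/2::real)^(ndist g E - k) \<le> delta_weight t E v g"
    and "(1/2::real)^(ndist g (E+v) - k) \<le> delta_weight t E v g"
    by (meson order_trans)+
qed

lemma sum_delta_weight_le: "(\<Sum>g<L. delta_weight t E v g) \<le> real t + 32"
proof -
  have "(\<Sum>g<L. (if g < t then 1 else 0::real)) = real (card {g. g < L \<and> g < t})"
    by (simp add: sum.If_cases Int_def conj_commute)
  also have "\<dots> \<le> real t" using card_mono[of "{..<t}" "{g. g < L \<and> g < t}"] by auto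
  finally show ?thesis
    using sum_half_power_ndist_le[where L=L and e=E] sum_half_power_ndist_le[where L=L and e="E+v"]
    by (simp add: delta_weight_def sum.distrib flip: sum_distrib_left)
qed

lemma locally_integrable_borel_measurable:
  fixes M :: "'a::euclidean_space measure"
  assumes sets_M: "sets M = sets borel" and li: "locally_integrable M f"
  shows "f \<in> borel_measurable M"
proof (rule borel_measurable_LIMSEQ_real)
  fix i :: nat
  have "set_integrable M (cball 0 (real i)) f" using li by (simp add: locally_integrable_def)
  then show "(\<lambda>x. indicator (cball 0 (real i)) x *\<^sub>R f x) \<in> borel_measurable M"
    by (auto simp: set_integrable_def)
next
  fix x :: 'a
  obtain N :: nat where N: "norm x \<le> real N" using real_arch_simple by blast
  have "\<forall>i\<ge>N. indicator (cball 0 (real i)) x *\<^sub>R f x = f x"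
    using N by (auto simp: dist_norm)
  then show "(\<lambda>i. indicator (cball 0 (real i)) x *\<^sub>R f x) \<longlonglongrightarrow> f x"
    by (intro tendsto_eventually) (auto simp: eventually_sequentially)
qed

lemma nn_integral_abs_diff_powr_le:
  assumes f: "f \<in> borel_measurable M" and S: "S \<in> sets M" and q: "q \<ge> 1"
  shows "(\<integral>\<^sup>+x\<in>S. ennreal (\<bar>f x - a\<bar> powr q) \<partial>M)
     \<le> ennreal (2 powr q) * ((\<integral>\<^sup>+x\<in>S. ennreal (\<bar>f x - b\<bar> powr q) \<partial>M)
                              + ennreal (\<bar>b - a\<bar> powr q) * emeasure M S)"
proof -
  have "ennreal (\<bar>f x - a\<bar> powr q) * indicator S x \<le>
      ennreal (2 powr q) * (ennreal (\<bar>f x - b\<bar> powr q) * indicator S x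
        + ennreal (\<bar>b - a\<bar> powr q) * indicator S x)" for x
  proof (cases "x \<in> S")
    case True
    have "ennreal (\<bar>f x - a\<bar> powr q) \<le> ennreal (2 powr q * (\<bar>f x - b\<bar> powr q + \<bar>b - a\<bar> powr q))"
      using abs_diff_powr_le[OF q] by (rule ennreal_leI)
    then show ?thesis using True by (simp add: ennreal_mult)
  qed simp
  then have "(\<integral>\<^sup>+x\<in>S. ennreal (\<bar>f x - a\<bar> powr q) \<partial>M)
      \<le> (\<integral>\<^sup>+x. ennreal (2 powr q) * (ennreal (\<bar>f x - b\<bar> powr q) * indicator S x
        + ennreal (\<bar>b - a\<bar> powr q) * indicator S x) \<partial>M)"
    by (intro nn_integral_mono)
  also have "\<dots> = ennreal (2 powr q) * ((\<integral>\<^sup>+x\<in>S. ennreal (\<bar>f x - b\<bar> powr q) \<partial>M)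
                              + ennreal (\<bar>b - a\<bar> powr q) * emeasure M S)"
    using f S by (simp add: nn_integral_cmult nn_integral_add nn_integral_cmult_indicator)
  finally show ?thesis .
qed

lemma nn_integral_le_card_mult:
  assumes G: "finite G" and cover: "S \<subseteq> (\<Union>y\<in>G. T y)" and T: "\<And>y. y \<in> G \<Longrightarrow> T y \<in> sets M"
    and h: "h \<in> borel_measurable M" and bound: "\<And>y. y \<in> G \<Longrightarrow> (\<integral>\<^sup>+x\<in>T y. h x \<partial>M) \<le> P"
  shows "(\<integral>\<^sup>+x\<in>S. h x \<partial>M) \<le> of_nat (card G) * P"
proof -
  have "h x * indicator S x \<le> (\<Sum>y\<in>G. h x * indicator (T y) x)" for x
  proof (cases "x \<in> S")
    case True
    then obtain y where y: "y \<in> G" "x \<in> T y" using cover by auto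
    then have "h x * indicator S x = h x * indicator (T y) x" using True by simp
    also have "\<dots> \<le> (\<Sum>y\<in>G. h x * indicator (T y) x)" using y G by (intro member_le_sum) auto
    finally show ?thesis .
  qed simp
  then have "(\<integral>\<^sup>+x\<in>S. h x \<partial>M) \<le> (\<integral>\<^sup>+x. (\<Sum>y\<in>G. h x * indicator (T y) x) \<partial>M)"
    by (intro nn_integral_mono)
  also have "\<dots> = (\<Sum>y\<in>G. \<integral>\<^sup>+x\<in>T y. h x \<partial>M)"
    using h T by (intro nn_integral_sum) auto
  also have "\<dots> \<le> (\<Sum>y\<in>G. P)" using bound by (intro sum_mono) auto
  finally show ?thesis by simp
qed

lemma emeasure_null_off_support:
  assumes sets_M: "sets M = sets borel" and K: "compact K" and disj: "K \<inter> support M = {}"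
  shows "emeasure M K = 0"
proof -
  have "\<forall>x\<in>K. \<exists>r>0. emeasure M (ball x r) = 0"
  proof
    fix x assume "x \<in> K"
    then have "x \<notin> support M" using disj by auto
    then show "\<exists>r>0. emeasure M (ball x r) = 0" by (auto simp: support_def not_less)
  qed
  then obtain r where r: "\<And>x. x \<in> K \<Longrightarrow> r x > 0 \<and> emeasure M (ball x (r x)) = 0"
    by metis
  then obtain C where C: "C \<subseteq> K" "finite C" "K \<subseteq> (\<Union>c\<in>C. ball c (r c))"
    using compactE_image[OF K, of K "\<lambda>x. ball x (r x)"] by force
  have "emeasure M K \<le> emeasure M (\<Union>c\<in>C. ball c (r c))"
    using C by (intro emeasure_mono) (auto simp: sets_M)
  also have "\<dots> \<le> (\<Sum>c\<in>C. emeasure M (ball c (r c)))"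
    using C by (intro emeasure_subadditive_finite) (auto simp: sets_M)
  also have "\<dots> = 0" using C r by (intro sum.neutral) auto
  finally show ?thesis by simp
qed

definition Cnorm_means :: "'a::euclidean_space measure \<Rightarrow> real \<Rightarrow> real \<Rightarrow> ('a \<Rightarrow> real) \<Rightarrow> ennreal" where
  "Cnorm_means M n e f =
     (SUP QR\<in>{(Q, R). Q \<in> cubes_doubling M \<and> R \<in> cubes_doubling M \<and> cube_set Q \<subseteq> cube_set R}.
        ennreal (measure M (cube_set (fst QR)) powr e) *
        ennreal \<bar>mean M f (fst QR) - mean M f (snd QR)\<bar> / K_QR M n (fst QR) (snd QR))"

lemma mean_diff_le_Cnorm_means:
  assumes HB: "Cnorm_means M n e f \<le> ennreal B" and B: "B \<ge> 0"
    and Q: "doubling M Q" and R: "doubling M R" and QR: "cube_set Q \<subseteq> cube_set R"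
    and D: "delta M n Q R \<le> ennreal D" and D0: "D \<ge> 0"
  shows "measure M (cube_set Q) powr e * \<bar>mean M f Q - mean M f R\<bar> \<le> B * (1 + D)"
proof -
  define x where "x = measure M (cube_set Q) powr e * \<bar>mean M f Q - mean M f R\<bar>"
  have x: "x \<ge> 0" by (simp add: x_def)
  have "(Q, R) \<in> {(Q, R). Q \<in> cubes_doubling M \<and> R \<in> cubes_doubling M \<and> cube_set Q \<subseteq> cube_set R}"
    using Q R QR by (simp add: cubes_doubling_def)
  then have "ennreal x / K_QR M n Q R \<le> Cnorm_means M n e f"
    unfolding Cnorm_means_def by (rule SUP_upper2) (simp add: x_def ennreal_mult)
  then have "ennreal x / K_QR M n Q R \<le> ennreal B" using HB by (rule order_trans)
  moreover obtain dr where dr: "delta M n Q R = ennreal dr" "0 \<le> dr" "dr \<le> D"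
    using D D0 by (cases "delta M n Q R") (auto simp: top_unique)
  moreover have "K_QR M n Q R = ennreal (1 + dr)"
    using dr by (simp add: K_QR_def ennreal_plus)
  then have "ennreal x / K_QR M n Q R = ennreal (x / (1 + dr))"
    using x dr by (simp add: divide_ennreal del: ennreal_plus)
  ultimately have "x / (1 + dr) \<le> B" using B by (simp add: ennreal_le_iff)
  then have "x \<le> B * (1 + dr)" using dr by (simp add: divide_le_eq)
  also have "\<dots> \<le> B * (1 + D)" using B dr by (intro mult_left_mono) auto
  finally show ?thesis by (simp add: x_def)
qed

text \<open>The two terms of \<open>Cnorm\<close> for finite \<open>q\<close>; \<open>e\<close> stands for \<open>1/p\<close>.\<close>
definition cube_osc :: "'a::euclidean_space measure \<Rightarrow> real \<Rightarrow> real \<Rightarrow> real \<Rightarrow> ('a \<Rightarrow> real) \<Rightarrow> 'a cube \<Rightarrow> ennreal" where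
  "cube_osc M k e q f Q =
     ennreal (measure M (cube_set (dilate k Q)) powr (e - 1/q)) *
     enn_powr (\<integral>\<^sup>+x\<in>cube_set Q. ennreal (\<bar>f x - mean M f (star M Q)\<bar> powr q) \<partial>M) (1/q)"

definition Cnorm_osc :: "'a::euclidean_space measure \<Rightarrow> real \<Rightarrow> real \<Rightarrow> real \<Rightarrow> ('a \<Rightarrow> real) \<Rightarrow> ennreal" where
  "Cnorm_osc M k e q f = (SUP Q\<in>cubes_pos M. cube_osc M k e q f Q)"

lemma Cnorm_finite_exponent:
  "Cnorm M n p (ereal q) k f = Cnorm_osc M k (einv p) q f + Cnorm_means M n (einv p) f"
  by (simp add: Cnorm_def Cnorm_osc_def Cnorm_means_def cube_osc_def Lq_on_def einv_def)

lemma cube_osc_le_Cnorm_osc: "Q \<in> cubes_pos M \<Longrightarrow> cube_osc M k e q f Q \<le> Cnorm_osc M k e q f"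
  unfolding Cnorm_osc_def by (rule SUP_upper)

lemma einv_exponents:
  assumes "1 \<le> q" "q \<le> p" "q = ereal qq"
  shows "1 \<le> qq" "0 \<le> einv p" "einv p * qq \<le> 1"
  using assms by (cases p; auto simp: einv_def field_simps)+

lemma equivalent_ennreal_norms:
  fixes N1 N2 :: "'f \<Rightarrow> ennreal"
  assumes C: "C \<ge> 1" and le: "\<And>f. P f \<Longrightarrow> N2 f \<le> ennreal C * N1 f \<and> N1 f \<le> ennreal C * N2 f"
  shows "{f. P f \<and> N1 f < \<infinity>} = {f. P f \<and> N2 f < \<infinity>}
         \<and> (\<exists>C::real. C \<ge> 1 \<and> (\<forall>f. P f \<longrightarrow> N2 f / ennreal C \<le> N1 f \<and> N1 f \<le> ennreal C * N2 f))"
proof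
  have "N1 f < \<infinity> \<longleftrightarrow> N2 f < \<infinity>" if "P f" for f
    using le[OF that] by (auto simp: ennreal_mult_less_top intro: le_less_trans)
  then show "{f. P f \<and> N1 f < \<infinity>} = {f. P f \<and> N2 f < \<infinity>}" by blast
  have "N2 f / ennreal C \<le> N1 f" if "P f" for f
    using le[OF that] C by (intro divide_le_posI_ennreal) auto
  then show "\<exists>C::real. C \<ge> 1 \<and> (\<forall>f. P f \<longrightarrow> N2 f / ennreal C \<le> N1 f \<and> N1 f \<le> ennreal C * N2 f)"
    using C le by blast
qed

section \<open>Measures with polynomial growth\<close>

locale growth_measure =
  fixes M :: "'a::euclidean_space measure" and C0 n :: real
  assumes sets_M: "sets M = sets borel"
    and radon: "\<And>K. compact K \<Longrightarrow> emeasure M K < \<infinity>"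
    and C0_pos: "C0 > 0"
    and n_pos: "n > 0" and n_le: "n \<le> real DIM('a)"
    and growth: "\<And>x l. x \<in> support M \<Longrightarrow> l > 0 \<Longrightarrow> emeasure M (Qc x l) \<le> ennreal (C0 * l powr n)"
begin

lemma sets_Qc [measurable]: "Qc z l \<in> sets M"
  using compact_Qc sets_M by (metis borel_compact)

lemma emeasure_Qc: "emeasure M (Qc z l) = ennreal (measure M (Qc z l))"
  using radon[OF compact_Qc] by (simp add: emeasure_eq_ennreal_measure less_top)

lemma measure_Qc_mono: "Qc z l \<subseteq> Qc z' l' \<Longrightarrow> measure M (Qc z l) \<le> measure M (Qc z' l')"
  using radon[OF compact_Qc, of z' l'] by (intro measure_mono_fmeasurable) (auto simp: fmeasurable_def)

text \<open>The growth condition only concerns centres in the support; other cubes pay a factor \<open>2^n\<close>.\<close>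
lemma measure_Qc_growth:
  assumes l: "l > 0"
  shows "measure M (Qc y l) \<le> C0 * (2 * l) powr n"
proof (cases "emeasure M (Qc y l) = 0")
  case True
  then show ?thesis using C0_pos by (simp add: measure_def)
next
  case False
  then obtain x where x: "x \<in> Qc y l" "x \<in> support M"
    using emeasure_null_off_support[OF sets_M compact_Qc] by blast
  have "Qc y l \<subseteq> Qc x (2 * l)"
  proof (rule Qc_subset_Qc)
    fix b :: 'a assume "b \<in> Basis"
    moreover have "\<bar>(y - x) \<bullet> b\<bar> = \<bar>(x - y) \<bullet> b\<bar>" by (simp add: inner_diff_left)
    ultimately show "\<bar>(y - x) \<bullet> b\<bar> + l/2 \<le> 2 * l/2" using x(1) by (auto simp: mem_Qc)
  qed
  then have "emeasure M (Qc y l) \<le> emeasure M (Qc x (2 * l))" by (intro emeasure_mono) auto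
  also have "\<dots> \<le> ennreal (C0 * (2 * l) powr n)" using growth[OF x(2)] l by simp
  finally show ?thesis using C0_pos by (simp add: emeasure_Qc ennreal_le_iff)
qed

lemma measure_Qc_dyadic_growth:
  assumes s: "s > 0"
  shows "measure M (Qc c (2^j * s)) \<le> C0 * (2^DIM('a))^j * (2 * s) powr n"
proof -
  have "measure M (Qc c (2^j * s)) \<le> C0 * (2^j * (2 * s)) powr n"
    using measure_Qc_growth[of "2^j * s"] s by (simp add: mult.left_commute)
  also have "\<dots> = C0 * (2 powr n)^j * (2 * s) powr n"
    using s by (simp add: powr_pow2_mult)
  also have "\<dots> \<le> C0 * (2^DIM('a))^j * (2 * s) powr n"
    using C0_pos two_powr_le_power[OF n_le]
    by (intro mult_right_mono mult_left_mono power_mono) auto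
  finally show ?thesis .
qed

lemma cubes_pos_Some: "Some (c, s) \<in> cubes_pos M \<longleftrightarrow> s > 0 \<and> emeasure M (Qc c s) > 0"
  by (simp add: cubes_pos_def Qc_def)

lemma measure_Qc_pos: "Some (c, s) \<in> cubes_pos M \<Longrightarrow> measure M (Qc c s) > 0"
  by (auto simp: cubes_pos_Some emeasure_Qc)

lemma cubes_pos_mono:
  assumes "Some (c, s) \<in> cubes_pos M" "s \<le> s'"
  shows "Some (c, s') \<in> cubes_pos M"
proof -
  have "emeasure M (Qc c s) \<le> emeasure M (Qc c s')"
    using assms by (intro emeasure_mono Qc_mono) auto
  then show ?thesis using assms by (auto simp: cubes_pos_Some)
qed

lemma doubling_Some: "doubling M (Some (c, s)) \<longleftrightarrow> Some (c, s) \<in> cubes_pos M \<and>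
    measure M (Qc c (2 * s)) \<le> 2^(DIM('a)+1) * measure M (Qc c s)"
proof -
  have "(2^(DIM('a)+1)::ennreal) * ennreal (measure M (Qc c s))
      = ennreal (2^(DIM('a)+1) * measure M (Qc c s))"
    by (simp add: ennreal_mult ennreal_power[symmetric])
  then show ?thesis
    by (simp add: doubling_def dilate_Some cube_set_Some emeasure_Qc ennreal_le_iff)
qed

definition star_index :: "'a cube \<Rightarrow> nat" where
  "star_index Q = (LEAST j. doubling M (dilate (2^j) Q))"

lemma star_Some: "star M (Some (c, s)) = Some (c, 2^(star_index (Some (c, s))) * s)"
  by (simp add: star_def star_index_def dilate_def)

lemma Qc_subset_star: "s \<ge> 0 \<Longrightarrow> Qc c s \<subseteq> cube_set (star M (Some (c, s)))"
  using mult_right_mono[of 1 "2^star_index (Some (c, s))" s]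
  by (auto simp: star_Some cube_set_Some intro!: Qc_mono)

lemma nondoubling_chain:
  assumes P: "Some (c, s) \<in> cubes_pos M" and am: "a \<le> m"
    and nd: "\<And>i. a \<le> i \<Longrightarrow> i < m \<Longrightarrow> \<not> doubling M (Some (c, 2^i * s))"
  shows "(2^(DIM('a)+1))^(m - a) * measure M (Qc c (2^a * s)) \<le> measure M (Qc c (2^m * s))"
  using am
proof (induction m rule: dec_induct)
  case (step m)
  have "Some (c, 2^m * s) \<in> cubes_pos M"
    using P by (rule cubes_pos_mono) (use P in \<open>auto simp: cubes_pos_Some\<close>)
  then have next_step: "2^(DIM('a)+1) * measure M (Qc c (2^m * s)) \<le> measure M (Qc c (2^(Suc m) * s))"
    using nd[OF step.hyps(1,2)] by (auto simp: doubling_Some mult.assoc)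
  have "(2^(DIM('a)+1))^(Suc m - a) * measure M (Qc c (2^a * s))
      = 2^(DIM('a)+1) * ((2^(DIM('a)+1))^(m - a) * measure M (Qc c (2^a * s)))"
    using step.hyps(1) by (simp add: Suc_diff_le)
  also have "\<dots> \<le> 2^(DIM('a)+1) * measure M (Qc c (2^m * s))"
    using step.IH by (intro mult_left_mono) auto
  finally show ?case using next_step by linarith
qed simp

text \<open>
  A chain of \<open>j\<close> non-doubling steps gains a factor \<open>2^((d+1) j)\<close>, the growth condition allows
  at most \<open>2^(d j)\<close>; the surplus \<open>2^j\<close> is paid by the bottom cube.
\<close>
lemma nondoubling_gap:
  assumes s: "s > 0" and chain: "(2^(DIM('a)+1))^j * x \<le> measure M (Qc c (2^j * s))"
  shows "2^j * x \<le> C0 * (2 * s) powr n"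
proof -
  have "(2^DIM('a))^j * (2^j * x) = (2^(DIM('a)+1))^j * x"
    by (simp add: power_mult_distrib power_add mult.assoc)
  also have "\<dots> \<le> measure M (Qc c (2^j * s))" by (rule chain)
  also have "\<dots> \<le> C0 * (2^DIM('a))^j * (2 * s) powr n" by (rule measure_Qc_dyadic_growth[OF s])
  finally have "(2^DIM('a))^j * (2^j * x) \<le> (2^DIM('a))^j * (C0 * (2 * s) powr n)"
    by (simp add: mult_ac)
  then show ?thesis by (rule mult_left_le_imp_le) simp
qed

lemma star_index_exists:
  assumes P: "Some (c, s) \<in> cubes_pos M"
  shows "\<exists>j. doubling M (dilate (2^j) (Some (c, s)))"
proof (rule ccontr)
  assume "\<not> ?thesis"
  then have nd: "\<And>i. \<not> doubling M (Some (c, 2^i * s))" by (auto simp: dilate_Some)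
  have s: "s > 0" using P by (simp add: cubes_pos_Some)
  define m0 where "m0 = measure M (Qc c s)"
  have m0: "m0 > 0" using measure_Qc_pos[OF P] by (simp add: m0_def)
  obtain j :: nat where j: "C0 * (2 * s) powr n / m0 < 2^j"
    using real_arch_pow[of 2] by auto
  have "(2^(DIM('a)+1))^j * m0 \<le> measure M (Qc c (2^j * s))"
    using nondoubling_chain[OF P, of 0 j] nd by (simp add: m0_def)
  then have "2^j * m0 \<le> C0 * (2 * s) powr n" by (rule nondoubling_gap[OF s])
  then show False using j m0 by (simp add: divide_less_eq mult.commute)
qed

lemma doubling_star:
  assumes "Some (c, s) \<in> cubes_pos M"
  shows "doubling M (Some (c, 2^(star_index (Some (c, s))) * s))"
  using LeastI_ex[OF star_index_exists[OF assms]] by (simp add: star_index_def dilate_Some)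

lemma measure_Qc_below_star:
  assumes P: "Some (c, s) \<in> cubes_pos M" and i: "i \<le> star_index (Some (c, s))"
  shows "measure M (Qc c (2^i * s)) \<le> C0 * (2^(Suc i) * s) powr n * (1/2)^(star_index (Some (c, s)) - i)"
proof -
  define j where "j = star_index (Some (c, s))"
  have s: "s > 0" using P by (simp add: cubes_pos_Some)
  have "\<not> doubling M (Some (c, 2^m * s))" if "m < j" for m
    using not_less_Least[of m "\<lambda>j. doubling M (dilate (2^j) (Some (c, s)))"] that
    by (simp add: j_def star_index_def dilate_Some)
  then have "(2^(DIM('a)+1))^(j - i) * measure M (Qc c (2^i * s)) \<le> measure M (Qc c (2^j * s))"
    using nondoubling_chain[OF P] i by (simp add: j_def)
  moreover have "2^j * s = 2^(j - i) * (2^i * s)"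
    using i by (simp add: j_def mult.assoc flip: power_add)
  ultimately have "2^(j - i) * measure M (Qc c (2^i * s)) \<le> C0 * (2 * (2^i * s)) powr n"
    using nondoubling_gap[of "2^i * s" "j - i"] s by simp
  then show ?thesis
    by (simp add: j_def field_simps power_one_over)
qed

lemma measure_Qc_dyadic_below_star:
  assumes P: "Some (c, 2^p * u) \<in> cubes_pos M"
    and m: "p \<le> m" "m \<le> p + star_index (Some (c, 2^p * u))"
  shows "measure M (Qc c (2^m * u))
           \<le> C0 * (2^(Suc m) * u) powr n * (1/2)^(p + star_index (Some (c, 2^p * u)) - m)"
proof -
  define i where "i = m - p"
  have "2^i * 2^p = (2::real)^m" using m(1) by (simp add: i_def flip: power_add)
  then have e1: "2^i * (2^p * u) = 2^m * u" and e2: "2^(Suc i) * (2^p * u) = 2^(Suc m) * u"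
    by (metis mult.assoc, metis mult.assoc power_Suc)
  have i: "i \<le> star_index (Some (c, 2^p * u))"
    and e3: "star_index (Some (c, 2^p * u)) - i = p + star_index (Some (c, 2^p * u)) - m"
    using m by (simp_all add: i_def)
  from measure_Qc_below_star[OF P i] show ?thesis unfolding e1 e2 e3 .
qed

section \<open>The constants \<open>K(Q,R)\<close>\<close>

lemma delta_integrand_le_dyadic:
  assumes a: "a > 0" and s: "2^k * a \<le> s" "s \<le> 2^(Suc k) * a"
  shows "measure M (Qc c s) * s powr (-n) / s
           \<le> measure M (Qc c (2^(Suc k) * a)) / (2^k * a) powr n / (2^k * a)"
proof -
  have pk: "2^k * a > 0" using a by simp
  then have sp: "s > 0" using s by linarith
  have "measure M (Qc c s) \<le> measure M (Qc c (2^(Suc k) * a))"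
    using s by (intro measure_Qc_mono Qc_mono) auto
  moreover have "s powr (-n) \<le> (2^k * a) powr (-n)"
    using s pk n_pos by (intro powr_mono2') auto
  ultimately have "measure M (Qc c s) * s powr (-n) \<le> measure M (Qc c (2^(Suc k) * a)) * (2^k * a) powr (-n)"
    by (intro mult_mono) auto
  moreover have "1 / s \<le> 1 / (2^k * a)" using s pk by (intro divide_left_mono) auto
  ultimately have "measure M (Qc c s) * s powr (-n) * (1 / s)
      \<le> measure M (Qc c (2^(Suc k) * a)) * (2^k * a) powr (-n) * (1 / (2^k * a))"
    by (rule mult_mono) (use sp in auto)
  then show ?thesis by (simp add: powr_minus divide_inverse)
qed

lemma delta_le_dyadic_sum:
  assumes a: "a > 0" and J: "J \<ge> 1" and side: "side_QR (Some (c, a)) R \<le> ereal (2^J * a)"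
  shows "delta M n (Some (c, a)) R
           \<le> ennreal (\<Sum>k<J. measure M (Qc c (2^(Suc k) * a)) / (2^k * a) powr n)"
proof -
  define T where "T k = measure M (Qc c (2^(Suc k) * a)) / (2^k * a) powr n" for k
  define G where "G k s = ennreal (T k / (2^k * a)) * indicator {2^k * a .. 2^(Suc k) * a} s"
    for k and s :: real
  have "indicator {s. ereal a \<le> ereal s \<and> ereal s \<le> side_QR (Some (c, a)) R} s *
        ennreal (measure M (Qc c s) * s powr (- n) / s) \<le> (\<Sum>k<J. G k s)" for s
  proof (cases "ereal a \<le> ereal s \<and> ereal s \<le> side_QR (Some (c, a)) R")
    case True
    moreover have "ereal s \<le> ereal (2^J * a)" using True side by (meson order.trans)
    ultimately have "a \<le> s" "s \<le> 2^J * a" by auto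
    then obtain k where k: "k < J" "2^k * a \<le> s" "s \<le> 2^(Suc k) * a"
      using dyadic_interval_exists[OF a J] by blast
    then have "ennreal (measure M (Qc c s) * s powr (- n) / s) \<le> G k s"
      using delta_integrand_le_dyadic[OF a k(2,3)] by (simp add: G_def T_def ennreal_leI)
    also have "\<dots> \<le> (\<Sum>k<J. G k s)" using k by (intro member_le_sum) auto
    finally show ?thesis using True by simp
  qed simp
  then have "delta M n (Some (c, a)) R \<le> (\<integral>\<^sup>+s. (\<Sum>k<J. G k s) \<partial>lborel)"
    unfolding delta_def by (auto intro!: nn_integral_mono)
  also have "\<dots> = (\<Sum>k<J. \<integral>\<^sup>+s. G k s \<partial>lborel)"
    by (intro nn_integral_sum) (auto simp: G_def)
  also have "\<dots> = (\<Sum>k<J. ennreal (T k))"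
  proof (intro sum.cong refl)
    fix k
    have pk: "2^k * a > 0" using a by simp
    have "(\<integral>\<^sup>+s. G k s \<partial>lborel) = ennreal (T k / (2^k * a)) * ennreal (2^(Suc k) * a - 2^k * a)"
      using a by (simp add: G_def nn_integral_cmult_indicator emeasure_lborel_Icc)
    also have "\<dots> = ennreal (T k)"
      using pk by (subst ennreal_mult'[symmetric]) (auto simp: T_def)
    finally show "(\<integral>\<^sup>+s. G k s \<partial>lborel) = ennreal (T k)" .
  qed
  also have "\<dots> = ennreal (\<Sum>k<J. T k)"
    by (intro sum_ennreal) (auto simp: T_def)
  finally show ?thesis by (simp add: T_def)
qed

text \<open>
  \<open>Q(c, 2^p u)*\<close> has side \<open>2^E u\<close> and \<open>Q(c, 2^(E+1) u)*\<close> has side \<open>2^(E+v+1) u\<close>; below each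
  of them the measures decay geometrically.
\<close>
lemma measure_centre_le_weight:
  assumes u: "u > 0" and P: "Some (c, 2^p * u) \<in> cubes_pos M" and pt: "p \<le> t"
    and E: "E = p + star_index (Some (c, 2^p * u))"
    and v: "v = star_index (Some (c, 2^(E+1) * u))"
    and g: "t \<le> g" "g < E + v + 2"
  shows "measure M (Qc c (2^(g+2) * u)) \<le> C0 * 8 powr n * delta_weight t E v g * (2^g * u) powr n"
proof -
  define W where "W = C0 * (2 * (2^(g+2) * u)) powr n"
  have W: "W \<ge> 0" using C0_pos by (simp add: W_def)
  consider (before_star) "g + 2 \<le> E" | (before_ancestor) "E < g + 2" "g + 2 \<le> E + 1 + v"
    | (top) "E + v \<le> g" by linarith
  then have "measure M (Qc c (2^(g+2) * u)) \<le> W * delta_weight t E v g"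
  proof cases
    case before_star
    then have "measure M (Qc c (2^(g+2) * u)) \<le> W * (1/2)^(ndist g E - 2)"
      using measure_Qc_dyadic_below_star[OF P, of "g+2"] pt g E by (simp add: W_def ndist_def mult.assoc)
    also have "\<dots> \<le> W * delta_weight t E v g"
      using half_power_ndist_le_delta_weight(1)[of 2] W by (intro mult_left_mono) auto
    finally show ?thesis .
  next
    case before_ancestor
    have "(2::real)^p \<le> 2^(E+1)" using E by (intro power_increasing) auto
    then have "Some (c, 2^(E+1) * u) \<in> cubes_pos M" using P u by (elim cubes_pos_mono) simp
    then have "measure M (Qc c (2^(g+2) * u)) \<le> W * (1/2)^(ndist g (E+v) - 1)"
      using measure_Qc_dyadic_below_star[where p="E+1" and m="g+2"] before_ancestor v by (simp add: W_def ndist_def mult.assoc)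
    also have "\<dots> \<le> W * delta_weight t E v g"
      using half_power_ndist_le_delta_weight(2)[of 1] W by (intro mult_left_mono) auto
    finally show ?thesis .
  next
    case top
    then have "ndist g (E+v) - 2 = 0" using g(2) unfolding ndist_def by arith
    then have "1 \<le> delta_weight t E v g" using half_power_ndist_le_delta_weight(2)[of 2 g E v t] by simp
    then have "W * 1 \<le> W * delta_weight t E v g" using W by (rule mult_left_mono)
    moreover have "measure M (Qc c (2^(g+2) * u)) \<le> W"
      using measure_Qc_growth[of "2^(g+2) * u" c] u by (simp add: W_def)
    ultimately show ?thesis by linarith
  qed
  moreover have "2 * (2^(g+2) * u) = 8 * (2^g * u)" by (simp add: power_add)
  then have "W = C0 * 8 powr n * (2^g * u) powr n" by (simp add: W_def powr_mult)
  ultimately show ?thesis by (simp add: mult_ac)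
qed

lemma measure_dyadic_le_weight:
  assumes u: "u > 0" and near: "\<And>b. b \<in> Basis \<Longrightarrow> \<bar>(y - c) \<bullet> b\<bar> \<le> 2^t * u / 2"
    and P: "Some (c, 2^p * u) \<in> cubes_pos M" and pt: "p \<le> t"
    and E: "E = p + star_index (Some (c, 2^p * u))"
    and v: "v = star_index (Some (c, 2^(E+1) * u))"
    and g: "g < E + v + 2"
  shows "measure M (Qc y (2^(Suc g) * u)) \<le> C0 * 8 powr n * delta_weight t E v g * (2^g * u) powr n"
proof (cases "g < t")
  case True
  have "measure M (Qc y (2^(Suc g) * u)) \<le> C0 * (2 * (2^(Suc g) * u)) powr n"
    using u by (intro measure_Qc_growth) auto
  also have "\<dots> \<le> C0 * (8 * (2^g * u)) powr n"
    using u C0_pos n_pos by (intro mult_left_mono powr_mono2) auto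
  also have "\<dots> \<le> C0 * (8 * (2^g * u)) powr n * delta_weight t E v g"
  proof -
    have "1 \<le> delta_weight t E v g" using True by (simp add: delta_weight_def)
    then show ?thesis using mult_left_mono[of 1 _ "C0 * (8 * (2^g * u)) powr n"] C0_pos by simp
  qed
  finally show ?thesis using u by (simp add: powr_mult mult_ac)
next
  case False
  have "Qc y (2^(Suc g) * u) \<subseteq> Qc c (2^(g+2) * u)"
  proof (rule Qc_subset_Qc)
    fix b :: 'a assume b: "b \<in> Basis"
    have "(2::real)^t \<le> 2^(Suc g)" using False by (intro power_increasing) auto
    then have "2^t * u/2 \<le> 2^g * u" using u by (simp add: mult_right_mono)
    moreover have "2^(Suc g) * u / 2 = 2^g * u" "2^(g+2) * u / 2 = 2 * (2^g * u)" by simp_all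
    ultimately show "\<bar>(y - c) \<bullet> b\<bar> + 2^(Suc g) * u / 2 \<le> 2^(g+2) * u / 2"
      using near[OF b] by linarith
  qed
  then have "measure M (Qc y (2^(Suc g) * u)) \<le> measure M (Qc c (2^(g+2) * u))"
    by (rule measure_Qc_mono)
  also have "\<dots> \<le> C0 * 8 powr n * delta_weight t E v g * (2^g * u) powr n"
    using False g by (intro measure_centre_le_weight[OF u P pt E v]) auto
  finally show ?thesis .
qed

lemma delta_le_weight_sum:
  assumes u: "u > 0" and near: "\<And>b. b \<in> Basis \<Longrightarrow> \<bar>(y - c) \<bullet> b\<bar> \<le> 2^t * u / 2"
    and P: "Some (c, 2^p * u) \<in> cubes_pos M" and pt: "p \<le> t"
    and E: "E = p + star_index (Some (c, 2^p * u))"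
    and v: "v = star_index (Some (c, 2^(E+1) * u))"
    and E': "E' \<le> E" and tE: "t \<le> E"
  shows "delta M n (Some (y, 2^E' * u)) (Some (c, 2^v * (2^(E+1) * u)))
           \<le> ennreal (C0 * 8 powr n * (real t + 32))"
proof -
  define a where "a = 2^E' * u"
  have a: "a > 0" using u by (simp add: a_def)
  define J where "J = E + 2 + v - E'"
  have J: "J \<ge> 1" using E' by (simp add: J_def)
  have "2^J * a = 2^(E+2+v) * u"
    using E' by (simp add: J_def a_def mult.assoc flip: power_add)
  then have "Qc c (2^v * (2^(E+1) * u)) \<subseteq> Qc y (2^J * a)"
    using dyadic_ancestor_subset_Qc[OF u near tE] by simp
  then have side: "side_QR (Some (y, a)) (Some (c, 2^v * (2^(E+1) * u))) \<le> ereal (2^J * a)"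
    using a by (intro side_QR_le) (auto simp: cube_set_Some)
  have "(\<Sum>k<J. measure M (Qc y (2^(Suc k) * a)) / (2^k * a) powr n)
      \<le> (\<Sum>k<J. C0 * 8 powr n * delta_weight t E v (E' + k))"
  proof (intro sum_mono)
    fix k assume "k \<in> {..<J}"
    then have g: "E' + k < E + v + 2" using E' by (simp add: J_def)
    have e: "2^(Suc k) * a = 2^(Suc (E' + k)) * u" "2^k * a = 2^(E' + k) * u"
      by (simp_all add: a_def power_add mult_ac)
    have "(2^(E' + k) * u) powr n > 0" using u by simp
    then show "measure M (Qc y (2^(Suc k) * a)) / (2^k * a) powr n \<le> C0 * 8 powr n * delta_weight t E v (E' + k)"
      unfolding e using measure_dyadic_le_weight[OF u near P pt E v g] by (simp add: divide_le_eq)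
  qed
  also have "\<dots> = C0 * 8 powr n * (\<Sum>k<J. delta_weight t E v (E' + k))"
    by (simp add: sum_distrib_left)
  also have "(\<Sum>k<J. delta_weight t E v (E' + k)) = (\<Sum>g\<in>{E'..<E'+J}. delta_weight t E v g)"
    by (simp add: sum.shift_bounds_nat_ivl[symmetric] lessThan_atLeast0 add.commute)
  also have "(\<Sum>g\<in>{E'..<E'+J}. delta_weight t E v g) \<le> (\<Sum>g<E+v+2. delta_weight t E v g)"
    using E' by (intro sum_mono2) (auto simp: J_def delta_weight_def)
  also have "\<dots> \<le> real t + 32" by (rule sum_delta_weight_le)
  finally have "(\<Sum>k<J. measure M (Qc y (2^(Suc k) * a)) / (2^k * a) powr n) \<le> C0 * 8 powr n * (real t + 32)"
    using C0_pos by (simp add: mult_left_mono)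
  with delta_le_dyadic_sum[OF a J side] show ?thesis
    by (simp add: a_def) (meson ennreal_leI order_trans)
qed

definition K_bound :: "nat \<Rightarrow> real" where
  "K_bound t = 1 + C0 * 8 powr n * (real t + 32)"

lemma K_bound_ge_1: "K_bound t \<ge> 1"
  using C0_pos by (simp add: K_bound_def)

lemma mean_star_diff_le_ancestor:
  assumes HB: "Cnorm_means M n e f \<le> ennreal B" and B: "B \<ge> 0" and u: "u > 0"
    and near: "\<And>b. b \<in> Basis \<Longrightarrow> \<bar>(y - c) \<bullet> b\<bar> \<le> 2^t * u / 2"
    and P: "Some (c, 2^p * u) \<in> cubes_pos M" and pt: "p \<le> t"
    and P': "Some (y, 2^p' * u) \<in> cubes_pos M"
    and E: "E = p + star_index (Some (c, 2^p * u))"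
    and E'_def: "E' = p' + star_index (Some (y, 2^p' * u))"
    and E': "E' \<le> E" and tE: "t \<le> E"
  shows "\<bar>mean M f (star M (Some (c, 2^p * u))) - mean M f (star M (Some (y, 2^p' * u)))\<bar>
     \<le> B * K_bound t * (measure M (cube_set (star M (Some (c, 2^p * u)))) powr (-e)
         + measure M (cube_set (star M (Some (y, 2^p' * u)))) powr (-e))"
proof -
  define v where "v = star_index (Some (c, 2^(E+1) * u))"
  define R where "R = Some (c, 2^v * (2^(E+1) * u))"
  define Q1 where "Q1 = Some (c, 2^E * u)"
  define Q2 where "Q2 = Some (y, 2^E' * u)"
  have s1: "star M (Some (c, 2^p * u)) = Q1" and s2: "star M (Some (y, 2^p' * u)) = Q2"
    by (simp_all add: star_Some E E'_def power_add Q1_def Q2_def mult_ac)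
  have d1: "doubling M Q1" using doubling_star[OF P] by (simp add: Q1_def E power_add mult_ac)
  have d2: "doubling M Q2" using doubling_star[OF P'] by (simp add: Q2_def E'_def power_add mult_ac)
  have "(2::real)^p \<le> 2^(E+1)" using E by (intro power_increasing) auto
  then have "Some (c, 2^(E+1) * u) \<in> cubes_pos M" using P u by (elim cubes_pos_mono) simp
  then have dR: "doubling M R" using doubling_star by (simp add: R_def v_def)
  have near0: "\<And>b. b \<in> Basis \<Longrightarrow> \<bar>(c - c) \<bullet> b\<bar> \<le> 2^t * u / 2" using u by simp
  have "\<bar>mean M f Qi - mean M f R\<bar> \<le> B * K_bound t * measure M (cube_set Qi) powr (-e)"
    if Qi: "Qi = Some (x, 2^Ei * u)" "doubling M Qi" and near_x: "\<And>b. b \<in> Basis \<Longrightarrow> \<bar>(x - c) \<bullet> b\<bar> \<le> 2^t * u / 2"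
      and "Ei \<le> E" for Qi x Ei
  proof -
    have "cube_set Qi \<subseteq> cube_set R"
      using Qc_subset_dyadic_ancestor[OF u near_x \<open>Ei \<le> E\<close> tE] by (simp add: Qi(1) R_def cube_set_Some)
    moreover have "delta M n Qi R \<le> ennreal (C0 * 8 powr n * (real t + 32))"
      unfolding Qi(1) R_def by (rule delta_le_weight_sum[OF u near_x P pt E v_def \<open>Ei \<le> E\<close> tE])
    ultimately have "measure M (cube_set Qi) powr e * \<bar>mean M f Qi - mean M f R\<bar> \<le> B * K_bound t"
      using mean_diff_le_Cnorm_means[OF HB B Qi(2) dR] C0_pos by (simp add: K_bound_def)
    moreover have "measure M (cube_set Qi) > 0"
      using Qi u by (auto simp: doubling_Some cube_set_Some intro: measure_Qc_pos)
    then have "measure M (cube_set Qi) powr e > 0" by simp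
    ultimately have "\<bar>mean M f Qi - mean M f R\<bar> \<le> B * K_bound t / measure M (cube_set Qi) powr e"
      by (simp add: pos_le_divide_eq mult.commute)
    then show ?thesis by (simp add: powr_minus divide_inverse)
  qed
  from this[OF Q1_def d1 near0 order_refl] this[OF Q2_def d2 near E']
  show ?thesis unfolding s1 s2 by (simp add: algebra_simps)
qed

lemma mean_star_diff_subcube_le:
  assumes HB: "Cnorm_means M n e f \<le> ennreal B" and B: "B \<ge> 0" and e: "e \<ge> 0" and u: "u > 0"
    and near: "\<And>b. b \<in> Basis \<Longrightarrow> \<bar>(y - z) \<bullet> b\<bar> \<le> 2^t * u / 2 - u / 2"
    and Qz: "Some (z, 2^t * u) \<in> cubes_pos M" and Qy: "Some (y, u) \<in> cubes_pos M"
  shows "\<bar>mean M f (star M (Some (z, 2^t * u))) - mean M f (star M (Some (y, u)))\<bar>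
     \<le> 2 * B * K_bound t * measure M (Qc y u) powr (-e)"
proof -
  define Ez where "Ez = t + star_index (Some (z, 2^t * u))"
  define Ey where "Ey = 0 + star_index (Some (y, 2^0 * u))"
  have near_yz: "\<bar>(y - z) \<bullet> b\<bar> \<le> 2^t * u / 2" and near_zy: "\<bar>(z - y) \<bullet> b\<bar> \<le> 2^t * u / 2"
    if "b \<in> Basis" for b
    using near[OF that] u by (simp_all add: abs_minus_commute inner_diff_left)
  have Qy': "Some (y, 2^0 * u) \<in> cubes_pos M" using Qy by simp
  have diff: "\<bar>mean M f (star M (Some (z, 2^t * u))) - mean M f (star M (Some (y, u)))\<bar>
     \<le> B * K_bound t * (measure M (cube_set (star M (Some (z, 2^t * u)))) powr (-e)
         + measure M (cube_set (star M (Some (y, u)))) powr (-e))"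
  proof (cases "Ey \<le> Ez")
    case True
    then show ?thesis
      using mean_star_diff_le_ancestor[OF HB B u near_yz Qz order_refl Qy' Ez_def Ey_def True] by (simp add: Ez_def)
  next
    case False
    moreover have "t \<le> Ey" using False by (simp add: Ez_def)
    ultimately show ?thesis
      using mean_star_diff_le_ancestor[OF HB B u near_zy Qy' _ Qz Ey_def Ez_def] by (simp add: abs_minus_commute add.commute)
  qed
  have "Qc y u \<subseteq> Qc z (2^t * u)"
    by (rule Qc_subset_Qc) (use near in fastforce)
  then have "Qc y u \<subseteq> cube_set (star M (Some (z, 2^t * u)))"
    using Qc_subset_star[of "2^t * u" z] u by simp
  moreover have "Qc y u \<subseteq> cube_set (star M (Some (y, u)))"
    using Qc_subset_star[of u y] u by simp
  ultimately have "measure M (cube_set (star M Q)) powr (-e) \<le> measure M (Qc y u) powr (-e)"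
    if "Q = Some (z, 2^t * u) \<or> Q = Some (y, u)" for Q
    using that measure_Qc_pos[OF Qy] e
    by (intro powr_mono2') (auto simp: star_Some cube_set_Some intro: measure_Qc_mono)
  from this[of "Some (z, 2^t * u)"] this[of "Some (y, u)"]
  have "measure M (cube_set (star M (Some (z, 2^t * u)))) powr (-e)
      + measure M (cube_set (star M (Some (y, u)))) powr (-e) \<le> 2 * measure M (Qc y u) powr (-e)"
    by simp
  then have "B * K_bound t * (measure M (cube_set (star M (Some (z, 2^t * u)))) powr (-e)
      + measure M (cube_set (star M (Some (y, u)))) powr (-e))
      \<le> B * K_bound t * (2 * measure M (Qc y u) powr (-e))"
    using B K_bound_ge_1[of t] by (intro mult_left_mono) auto
  also have "\<dots> = 2 * B * K_bound t * measure M (Qc y u) powr (-e)" by (simp add: mult_ac)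
  finally show ?thesis by (rule order_trans[OF diff])
qed

section \<open>Changing the dilation factor\<close>

lemma nn_integral_subcube_le:
  assumes f: "f \<in> borel_measurable M" and q: "qq \<ge> 1" and e0: "e \<ge> 0" and eq: "e * qq \<le> 1"
    and A: "A \<ge> 0" and B: "B \<ge> 0"
    and HA: "Cnorm_osc M k' e qq f \<le> ennreal A" and HB: "Cnorm_means M n e f \<le> ennreal B"
    and u: "u > 0" and Qz: "Some (z, 2^t * u) \<in> cubes_pos M"
    and near: "\<And>b. b \<in> Basis \<Longrightarrow> \<bar>(y - z) \<bullet> b\<bar> \<le> 2^t * u / 2 - u / 2"
    and sub: "Qc y (k' * u) \<subseteq> Qc z (k * (2^t * u))" and k': "k' \<ge> 1"
  shows "(\<integral>\<^sup>+x\<in>Qc y u. ennreal (\<bar>f x - mean M f (star M (Some (z, 2^t * u)))\<bar> powr qq) \<partial>M)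
    \<le> ennreal (2 powr qq * (A powr qq + (2 * B * K_bound t) powr qq)
                * measure M (Qc z (k * (2^t * u))) powr (1 - e * qq))"
proof (cases "emeasure M (Qc y u) = 0")
  case True
  then show ?thesis by (simp add: nn_integral_null_set null_sets_def)
next
  case False
  define X where "X = measure M (Qc z (k * (2^t * u)))"
  define Y where "Y = measure M (Qc y (k' * u))"
  define \<mu> where "\<mu> = measure M (Qc y u)"
  define ms where "ms = mean M f (star M (Some (z, 2^t * u)))"
  define my where "my = mean M f (star M (Some (y, u)))"
  have Qy: "Some (y, u) \<in> cubes_pos M" using False u by (auto simp: cubes_pos_Some intro: gr_zeroI)
  have mu: "\<mu> > 0" using measure_Qc_pos[OF Qy] by (simp add: \<mu>_def)
  have "Qc y u \<subseteq> Qc y (k' * u)" using k' u by (intro Qc_mono) auto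
  then have Y: "\<mu> \<le> Y" and YX: "Y \<le> X"
    using sub by (auto simp: \<mu>_def X_def Y_def intro: measure_Qc_mono)
  have "ennreal (Y powr (e - 1/qq)) * enn_powr (\<integral>\<^sup>+x\<in>Qc y u. ennreal (\<bar>f x - my\<bar> powr qq) \<partial>M) (1/qq)
      \<le> ennreal A"
    using order_trans[OF cube_osc_le_Cnorm_osc[OF Qy] HA]
    by (simp add: cube_osc_def cube_set_dilate_Some cube_set_Some Y_def my_def)
  then have "(\<integral>\<^sup>+x\<in>Qc y u. ennreal (\<bar>f x - my\<bar> powr qq) \<partial>M) \<le> ennreal (A powr qq * Y powr (1 - e * qq))"
    using mu Y by (intro le_of_scaled_root_le[OF _ A q]) auto
  also have "\<dots> \<le> ennreal (A powr qq * X powr (1 - e * qq))"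
    using mu Y YX eq by (intro ennreal_leI mult_left_mono powr_mono2) auto
  finally have I: "(\<integral>\<^sup>+x\<in>Qc y u. ennreal (\<bar>f x - my\<bar> powr qq) \<partial>M) \<le> ennreal (A powr qq * X powr (1 - e * qq))" .
  have "\<bar>my - ms\<bar> \<le> 2 * B * K_bound t * \<mu> powr (-e)"
    using mean_star_diff_subcube_le[OF HB B e0 u near Qz Qy] by (simp add: \<mu>_def ms_def my_def abs_minus_commute)
  then have D: "\<bar>my - ms\<bar> powr qq * \<mu> \<le> (2 * B * K_bound t) powr qq * X powr (1 - e * qq)"
    using mu Y YX B K_bound_ge_1[of t] q eq by (intro powr_mult_measure_le) auto
  have "(\<integral>\<^sup>+x\<in>Qc y u. ennreal (\<bar>f x - ms\<bar> powr qq) \<partial>M)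
      \<le> ennreal (2 powr qq) * ((\<integral>\<^sup>+x\<in>Qc y u. ennreal (\<bar>f x - my\<bar> powr qq) \<partial>M)
                                + ennreal (\<bar>my - ms\<bar> powr qq) * emeasure M (Qc y u))"
    by (rule nn_integral_abs_diff_powr_le[OF f _ q]) simp
  also have "\<dots> \<le> ennreal (2 powr qq) * (ennreal (A powr qq * X powr (1 - e * qq))
                                        + ennreal ((2 * B * K_bound t) powr qq * X powr (1 - e * qq)))"
    using I D by (intro mult_left_mono add_mono) (auto simp: emeasure_Qc \<mu>_def ennreal_mult[symmetric])
  also have "\<dots> = ennreal (2 powr qq * (A powr qq + (2 * B * K_bound t) powr qq) * X powr (1 - e * qq))"
    by (simp add: ennreal_mult[symmetric] ennreal_plus[symmetric] algebra_simps del: ennreal_plus)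
  finally show ?thesis by (simp add: ms_def X_def)
qed

lemma cube_osc_le:
  assumes f: "f \<in> borel_measurable M" and q: "qq \<ge> 1" and e0: "e \<ge> 0" and eq: "e * qq \<le> 1"
    and A: "A \<ge> 0" and B: "B \<ge> 0"
    and HA: "Cnorm_osc M k' e qq f \<le> ennreal A" and HB: "Cnorm_means M n e f \<le> ennreal B"
    and k: "1 < k" "k \<le> k'" and t: "k' - 1 \<le> (k - 1) * 2^t"
    and Q: "Some (z, l) \<in> cubes_pos M"
  shows "cube_osc M k e qq f (Some (z, l)) \<le> ennreal (4 * (2^t)^DIM('a) * (A + 2 * B * K_bound t))"
proof -
  have l: "l > 0" using Q by (simp add: cubes_pos_Some)
  define u where "u = l / 2^t"
  have u: "u > 0" and lu: "2^t * u = l" using l by (simp_all add: u_def)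
  define G where "G = dyadic_centres z l t"
  define X where "X = measure M (Qc z (k * l))"
  define ms where "ms = mean M f (star M (Some (z, l)))"
  define P where "P = 2 powr qq * (A powr qq + (2 * B * K_bound t) powr qq) * X powr (1 - e * qq)"
  have "Qc z l \<subseteq> Qc z (k * l)" using k l by (intro Qc_mono) auto
  then have "measure M (Qc z l) \<le> X" unfolding X_def by (rule measure_Qc_mono)
  with measure_Qc_pos[OF Q] have X: "X > 0" by simp
  have Qz: "Some (z, 2^t * u) \<in> cubes_pos M" using Q by (simp add: lu)
  have piece: "(\<integral>\<^sup>+x\<in>Qc y u. ennreal (\<bar>f x - ms\<bar> powr qq) \<partial>M) \<le> ennreal P" if y: "y \<in> G" for y
  proof -
    have near: "\<bar>(y - z) \<bullet> b\<bar> \<le> 2^t * u / 2 - u / 2" if "b \<in> Basis" for b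
      using dyadic_centre_near[of l y z t b] l y that by (simp add: G_def lu u_def)
    have "Qc y (k' * u) \<subseteq> Qc z (k * (2^t * u))"
    proof (rule Qc_subset_Qc)
      fix b :: 'a assume b: "b \<in> Basis"
      have "(k' - 1) * u \<le> (k - 1) * 2^t * u" using t u by (intro mult_right_mono) auto
      then show "\<bar>(y - z) \<bullet> b\<bar> + k' * u / 2 \<le> k * (2^t * u) / 2"
        using near[OF b] by (simp add: algebra_simps)
    qed
    from nn_integral_subcube_le[OF f q e0 eq A B HA HB u Qz near this] k
    show ?thesis unfolding lu by (simp add: ms_def P_def X_def)
  qed
  have "(\<integral>\<^sup>+x\<in>Qc z l. ennreal (\<bar>f x - ms\<bar> powr qq) \<partial>M) \<le> of_nat (card G) * ennreal P"
    using f piece Qc_subset_dyadic_subcubes[OF l, of z t]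
    by (intro nn_integral_le_card_mult) (auto simp: G_def finite_dyadic_centres u_def)
  also have "\<dots> = ennreal (real (card G) * P)"
    by (simp add: P_def ennreal_mult ennreal_of_nat_eq_real_of_nat)
  finally have I: "(\<integral>\<^sup>+x\<in>Qc z l. ennreal (\<bar>f x - ms\<bar> powr qq) \<partial>M)
      \<le> ennreal (real (card G) * (2 powr qq * (A powr qq + (2 * B * K_bound t) powr qq) * X powr (1 - e * qq)))"
    by (simp add: P_def)
  have "real (card G) \<le> (2^t)^DIM('a)"
    using card_dyadic_centres_le[of z l t] unfolding G_def by (metis of_nat_le_iff of_nat_numeral of_nat_power)
  with scaled_root_le_of_le[OF X q A _ _ _ _ I] B K_bound_ge_1[of t]
  show ?thesis by (simp add: cube_osc_def cube_set_dilate_Some cube_set_Some X_def ms_def)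
qed

lemma Cnorm_osc_le:
  assumes f: "f \<in> borel_measurable M" and q: "qq \<ge> 1" and e0: "e \<ge> 0" and eq: "e * qq \<le> 1"
    and A: "A \<ge> 0" and B: "B \<ge> 0"
    and HA: "Cnorm_osc M k' e qq f \<le> ennreal A" and HB: "Cnorm_means M n e f \<le> ennreal B"
    and k: "1 < k" "k \<le> k'" and t: "k' - 1 \<le> (k - 1) * 2^t"
  shows "Cnorm_osc M k e qq f \<le> ennreal (4 * (2^t)^DIM('a) * (A + 2 * B * K_bound t))"
  unfolding Cnorm_osc_def
proof (rule SUP_least)
  fix Q assume Q: "Q \<in> cubes_pos M"
  show "cube_osc M k e qq f Q \<le> ennreal (4 * (2^t)^DIM('a) * (A + 2 * B * K_bound t))"
  proof (cases Q)
    case None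
    then have "cube_osc M k e qq f Q = cube_osc M k' e qq f Q" by (simp add: cube_osc_def dilate_def)
    also have "\<dots> \<le> ennreal A" using cube_osc_le_Cnorm_osc[OF Q] HA by (rule order_trans)
    also have "A \<le> 1 * (A + 2 * B * K_bound t)" using B K_bound_ge_1[of t] by simp
    also have "\<dots> \<le> 4 * (2^t)^DIM('a) * (A + 2 * B * K_bound t)"
    proof (rule mult_right_mono)
      have "(1::real) \<le> (2^t)^DIM('a)" by (simp add: one_le_power)
      then show "1 \<le> 4 * ((2::real)^t)^DIM('a)" by linarith
    qed (use A B K_bound_ge_1[of t] in simp)
    finally show ?thesis by (simp add: ennreal_leI)
  next
    case (Some zl)
    then show ?thesis using cube_osc_le[OF assms] Q by (cases zl) auto
  qed
qed

lemma Cnorm_le_const_mult: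
  assumes k: "1 < k" "k \<le> k'" and q: "qq \<ge> 1" and e0: "0 \<le> einv p" and eq: "einv p * qq \<le> 1"
  shows "\<exists>C\<ge>1. \<forall>f. locally_integrable M f \<longrightarrow>
           Cnorm M n p (ereal qq) k f \<le> ennreal C * Cnorm M n p (ereal qq) k' f"
proof -
  obtain t :: nat where "(k' - 1) / (k - 1) < 2^t" using real_arch_pow[of 2] by auto
  then have t: "k' - 1 \<le> (k - 1) * 2^t" using k by (simp add: divide_less_eq mult.commute)
  define N :: real where "N = (2^t)^DIM('a)"
  define K where "K = K_bound t"
  define C where "C = 8 * N * K + 1"
  have N: "N \<ge> 1" and K: "K \<ge> 1" using K_bound_ge_1[of t] by (simp_all add: N_def K_def one_le_power)
  then have C: "C \<ge> 1" by (simp add: C_def)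
  have "Cnorm M n p (ereal qq) k f \<le> ennreal C * Cnorm M n p (ereal qq) k' f"
    if li: "locally_integrable M f" for f
  proof (cases "Cnorm M n p (ereal qq) k' f = top")
    case True
    then show ?thesis using C by (simp add: ennreal_mult_top)
  next
    case False
    define A where "A = enn2real (Cnorm_osc M k' (einv p) qq f)"
    define B where "B = enn2real (Cnorm_means M n (einv p) f)"
    have HA: "Cnorm_osc M k' (einv p) qq f = ennreal A" and HB: "Cnorm_means M n (einv p) f = ennreal B"
      using False by (simp_all add: Cnorm_finite_exponent A_def B_def less_top)
    have A: "A \<ge> 0" and B: "B \<ge> 0" by (simp_all add: A_def B_def)
    have f: "f \<in> borel_measurable M" by (rule locally_integrable_borel_measurable[OF sets_M li])
    have "Cnorm M n p (ereal qq) k f \<le> ennreal (4 * N * (A + 2 * B * K)) + ennreal B"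
      unfolding Cnorm_finite_exponent HB N_def K_def
      using Cnorm_osc_le[OF f q e0 eq A B _ _ k t] HA HB by (intro add_right_mono) simp
    also have "\<dots> \<le> ennreal (C * (A + B))"
    proof -
      have "8 * N \<le> 8 * N * K" using mult_left_mono[OF K, of "8 * N"] N by simp
      then have "4 * N * A \<le> 8 * N * K * A" using A N by (intro mult_right_mono) auto
      moreover have "4 * N * (A + 2 * B * K) + B = 4 * N * A + 8 * N * K * B + B"
        and "C * (A + B) = 8 * N * K * A + A + 8 * N * K * B + B"
        by (simp_all add: C_def algebra_simps)
      ultimately have "4 * N * (A + 2 * B * K) + B \<le> C * (A + B)" using A by linarith
      then show ?thesis using A B K N by (simp add: ennreal_leI del: ennreal_plus flip: ennreal_plus)
    qed
    also have "\<dots> = ennreal C * Cnorm M n p (ereal qq) k' f"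
      using A B C by (simp add: Cnorm_finite_exponent HA HB ennreal_mult)
    finally show ?thesis .
  qed
  then show ?thesis using C by blast
qed

lemma measure_dilate_pos:
  assumes Q: "Q \<in> cubes_pos M" and k: "k \<ge> 1"
  shows "measure M (cube_set (dilate k Q)) > 0"
proof (cases Q)
  case None
  then have "emeasure M UNIV < \<infinity>" "emeasure M UNIV > 0" using Q by (auto simp: cubes_pos_def cube_set_def)
  then show ?thesis using None by (simp add: dilate_def cube_set_def measure_def enn2real_positive_iff)
next
  case (Some zl)
  then obtain z l where Q': "Q = Some (z, l)" by force
  then have "measure M (Qc z l) \<le> measure M (Qc z (k * l))"
    using k Q by (intro measure_Qc_mono Qc_mono) (auto simp: cubes_pos_Some)
  then show ?thesis using measure_Qc_pos Q Q' by (fastforce simp: cube_set_dilate_Some)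
qed

lemma measure_dilate_mono:
  assumes Q: "Q \<in> cubes_pos M" and k: "k \<le> k'"
  shows "measure M (cube_set (dilate k Q)) \<le> measure M (cube_set (dilate k' Q))"
proof (cases Q)
  case (Some zl)
  then obtain z l where "Q = Some (z, l)" by force
  then show ?thesis
    using k Q by (auto simp: cube_set_dilate_Some cubes_pos_Some intro!: measure_Qc_mono Qc_mono mult_right_mono)
qed (simp add: dilate_def)

lemma Cnorm_antimono_dilation:
  assumes k: "1 \<le> k" "k \<le> k'" and e: "einv p \<le> einv q"
  shows "Cnorm M n p q k' f \<le> Cnorm M n p q k f"
proof -
  have "ennreal (measure M (cube_set (dilate k' Q)) powr (einv p - einv q)) * L
      \<le> ennreal (measure M (cube_set (dilate k Q)) powr (einv p - einv q)) * L"
    if Q: "Q \<in> cubes_pos M" for Q L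
    using e measure_dilate_pos[OF Q k(1)] measure_dilate_mono[OF Q k(2)]
    by (intro mult_right_mono ennreal_leI powr_mono2') auto
  then show ?thesis unfolding Cnorm_def by (intro add_right_mono SUP_mono) blast
qed

lemma Cnorm_dilation_invariant:
  assumes k: "1 \<le> k" "1 \<le> k'" and e: "einv p = einv q"
  shows "Cnorm M n p q k' f = Cnorm M n p q k f"
proof -
  have "measure M (cube_set (dilate k' Q)) powr (einv p - einv q)
      = measure M (cube_set (dilate k Q)) powr (einv p - einv q)" if "Q \<in> cubes_pos M" for Q
    using measure_dilate_pos[OF that k(1)] measure_dilate_pos[OF that k(2)] e by simp
  then show ?thesis unfolding Cnorm_def by (intro arg_cong2[where f="(+)"] SUP_cong) auto
qed

lemma Cnorm_equivalent:
  assumes k: "1 < k" "k \<le> k'" and q: "1 \<le> q" "q \<le> p"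
  shows "\<exists>C\<ge>1. \<forall>f. locally_integrable M f \<longrightarrow>
           Cnorm M n p q k' f \<le> ennreal C * Cnorm M n p q k f \<and> Cnorm M n p q k f \<le> ennreal C * Cnorm M n p q k' f"
proof (cases q)
  case (real qq)
  note e = einv_exponents[OF q real]
  obtain C where C: "C \<ge> 1"
    and le: "\<And>f. locally_integrable M f \<Longrightarrow> Cnorm M n p q k f \<le> ennreal C * Cnorm M n p q k' f"
    using Cnorm_le_const_mult[OF k e] real by auto
  have "einv p \<le> einv q" using e real by (simp add: einv_def pos_le_divide_eq)
  then have "Cnorm M n p q k' f \<le> Cnorm M n p q k f" for f
    using k by (intro Cnorm_antimono_dilation) auto
  then have "Cnorm M n p q k' f \<le> ennreal C * Cnorm M n p q k f" for f
    by (rule order_trans[OF _ ennreal_le_mult_self[OF C]])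
  then show ?thesis using C le by blast
next
  case PInf
  then have "einv p = einv q" using q by (auto simp: einv_def top_unique[unfolded top_ereal_def])
  then have "Cnorm M n p q k' f = Cnorm M n p q k f" for f
    using k by (intro Cnorm_dilation_invariant) auto
  then show ?thesis by (intro exI[of _ 1]) simp
qed (use q in simp)

end

theorem mainTheorem3:
  fixes M :: "'a::euclidean_space measure"
    and C0 n :: real and p q :: ereal and k1 k2 :: real
  assumes sets_M: "sets M = sets borel"
    and radon: "\<And>K. compact K \<Longrightarrow> emeasure M K < \<infinity>"
    and C0_pos: "C0 > 0"
    and n_pos: "n > 0" and n_le: "n \<le> real DIM('a)"
    and growth: "\<And>x l. x \<in> support M \<Longrightarrow> l > 0 \<Longrightarrow> emeasure M (Qc x l) \<le> ennreal (C0 * l powr n)"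
    and q_ge: "1 \<le> q" and qp: "q \<le> p"
    and k1: "k1 > 1" and k2: "k2 > 1"
  shows "{f. locally_integrable M f \<and> Cnorm M n p q k1 f < \<infinity>}
           = {f. locally_integrable M f \<and> Cnorm M n p q k2 f < \<infinity>}
         \<and> (\<exists>C::real. C \<ge> 1 \<and> (\<forall>f. locally_integrable M f \<longrightarrow>
              Cnorm M n p q k2 f / ennreal C \<le> Cnorm M n p q k1 f
            \<and> Cnorm M n p q k1 f \<le> ennreal C * Cnorm M n p q k2 f))"
proof -
  interpret growth_measure M C0 n
    using sets_M radon C0_pos n_pos n_le growth by unfold_locales
  obtain C where C: "C \<ge> 1" and le: "\<And>f. locally_integrable M f \<Longrightarrow>
      Cnorm M n p q k2 f \<le> ennreal C * Cnorm M n p q k1 f \<and> Cnorm M n p q k1 f \<le> ennreal C * Cnorm M n p q k2 f"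
  proof (cases "k1 \<le> k2")
    case True
    then show ?thesis using that Cnorm_equivalent[OF k1 True q_ge qp] by blast
  next
    case False
    then show ?thesis using that Cnorm_equivalent[OF k2 _ q_ge qp, of k1] by force
  qed
  show ?thesis by (rule equivalent_ennreal_norms[OF C le])
qed

end
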